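(* Let $(\mathfrak g,[\cdot,\cdot]_{\mathfrak g},E)$ be an ENL algebra, $(W;T,\rho)$ an ENE-representation of it, and $K:W\to\mathfrak g$ an ENE-relative Rota–Baxter operator with respect to $(W;T,\rho)$. Then $(W,\{\cdot,\cdot\}_K,T)$ is a pre-ENL algebra, where $\{u,v\}_K=\rho(Ku)v$ for $u,v\in W$.
   Context: Vector spaces are finite-dimensional over an algebraically closed field of characteristic zero. An ENL algebra is a Lie algebra with linear $E$ satisfying $E[x,y]=[x,Ey]$ for all $x,y$. An ENE-representation $(W;T,\rho)$ is a representation $\rho:\mathfrak g\to\mathfrak{gl}(W)$ with linear $T$ such that $T(\rho(x)u)=\rho(Ex)u=\rho(x)(Tu)$. An ENE-relative Rota–Baxter operator is a linear $K:W\to\mathfrak g$ with $[Ku,Kv]_{\mathfrak g}=K(\rho(Ku)v-\rho(Kv)u)$ for all $u,v\in W$ and $E\circ K=K\circ T$. A pre-Lie algebra is a vector space with bilinear product $\{\cdot,\cdot\}$ satisfying $\{\{x,y\},z\}-\{x,\{y,z\}\}=\{\{y,x\},z\}-\{y,\{x,z\}\}$; a pre-ENL algebra $(A,\{\cdot,\cdot\},T)$ is a pre-Lie algebra with linear $T$ such that $T\{u,v\}=\{Tu,v\}=\{u,Tv\}$ for all $u,v$. *)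

theory Defs
  imports Complex_Main "HOL-Computational_Algebra.Polynomial"
begin

definition alg_closed_field :: "'k::field itself \<Rightarrow> bool" where
  "alg_closed_field _ \<longleftrightarrow> (\<forall>p::'k poly. 0 < degree p \<longrightarrow> (\<exists>x. poly p x = 0))"

definition fd_vector_space :: "('k::field \<Rightarrow> 'v::ab_group_add \<Rightarrow> 'v) \<Rightarrow> bool" where
  "fd_vector_space sc \<longleftrightarrow> (\<exists>B. finite_dimensional_vector_space sc B)"

definition bilin :: "('k::field \<Rightarrow> 'a::ab_group_add \<Rightarrow> 'a) \<Rightarrow> ('k \<Rightarrow> 'b::ab_group_add \<Rightarrow> 'b)
    \<Rightarrow> ('k \<Rightarrow> 'c::ab_group_add \<Rightarrow> 'c) \<Rightarrow> ('a \<Rightarrow> 'b \<Rightarrow> 'c) \<Rightarrow> bool" where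
  "bilin sa sb sc f \<longleftrightarrow> (\<forall>x. Vector_Spaces.linear sb sc (f x)) \<and> (\<forall>y. Vector_Spaces.linear sa sc (\<lambda>x. f x y))"

definition lie_algebra :: "('k::field \<Rightarrow> 'g::ab_group_add \<Rightarrow> 'g) \<Rightarrow> ('g \<Rightarrow> 'g \<Rightarrow> 'g) \<Rightarrow> bool" where
  "lie_algebra sg br \<longleftrightarrow> fd_vector_space sg \<and> bilin sg sg sg br \<and>
     (\<forall>x. br x x = 0) \<and>
     (\<forall>x y z. br x (br y z) + br y (br z x) + br z (br x y) = 0)"

definition ENL_algebra :: "('k::field \<Rightarrow> 'g::ab_group_add \<Rightarrow> 'g) \<Rightarrow> ('g \<Rightarrow> 'g \<Rightarrow> 'g) \<Rightarrow> ('g \<Rightarrow> 'g) \<Rightarrow> bool" where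
  "ENL_algebra sg br E \<longleftrightarrow> lie_algebra sg br \<and> Vector_Spaces.linear sg sg E \<and>
     (\<forall>x y. E (br x y) = br x (E y))"

definition lie_rep :: "('k::field \<Rightarrow> 'g::ab_group_add \<Rightarrow> 'g) \<Rightarrow> ('g \<Rightarrow> 'g \<Rightarrow> 'g)
    \<Rightarrow> ('k \<Rightarrow> 'w::ab_group_add \<Rightarrow> 'w) \<Rightarrow> ('g \<Rightarrow> 'w \<Rightarrow> 'w) \<Rightarrow> bool" where
  "lie_rep sg br sw rho \<longleftrightarrow> fd_vector_space sw \<and> bilin sg sw sw rho \<and>
     (\<forall>x y u. rho (br x y) u = rho x (rho y u) - rho y (rho x u))"

definition ENE_rep :: "('k::field \<Rightarrow> 'g::ab_group_add \<Rightarrow> 'g) \<Rightarrow> ('g \<Rightarrow> 'g \<Rightarrow> 'g) \<Rightarrow> ('g \<Rightarrow> 'g)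
    \<Rightarrow> ('k \<Rightarrow> 'w::ab_group_add \<Rightarrow> 'w) \<Rightarrow> ('w \<Rightarrow> 'w) \<Rightarrow> ('g \<Rightarrow> 'w \<Rightarrow> 'w) \<Rightarrow> bool" where
  "ENE_rep sg br E sw T rho \<longleftrightarrow> lie_rep sg br sw rho \<and> Vector_Spaces.linear sw sw T \<and>
     (\<forall>x u. T (rho x u) = rho (E x) u \<and> rho (E x) u = rho x (T u))"

definition ENE_relative_RB :: "('k::field \<Rightarrow> 'g::ab_group_add \<Rightarrow> 'g) \<Rightarrow> ('g \<Rightarrow> 'g \<Rightarrow> 'g) \<Rightarrow> ('g \<Rightarrow> 'g)
    \<Rightarrow> ('k \<Rightarrow> 'w::ab_group_add \<Rightarrow> 'w) \<Rightarrow> ('w \<Rightarrow> 'w) \<Rightarrow> ('g \<Rightarrow> 'w \<Rightarrow> 'w) \<Rightarrow> ('w \<Rightarrow> 'g) \<Rightarrow> bool" where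
  "ENE_relative_RB sg br E sw T rho K \<longleftrightarrow> Vector_Spaces.linear sw sg K \<and>
     (\<forall>u v. br (K u) (K v) = K (rho (K u) v - rho (K v) u)) \<and>
     E \<circ> K = K \<circ> T"

definition pre_Lie_algebra :: "('k::field \<Rightarrow> 'a::ab_group_add \<Rightarrow> 'a) \<Rightarrow> ('a \<Rightarrow> 'a \<Rightarrow> 'a) \<Rightarrow> bool" where
  "pre_Lie_algebra sa m \<longleftrightarrow> fd_vector_space sa \<and> bilin sa sa sa m \<and>
     (\<forall>x y z. m (m x y) z - m x (m y z) = m (m y x) z - m y (m x z))"

definition pre_ENL_algebra :: "('k::field \<Rightarrow> 'a::ab_group_add \<Rightarrow> 'a) \<Rightarrow> ('a \<Rightarrow> 'a \<Rightarrow> 'a) \<Rightarrow> ('a \<Rightarrow> 'a) \<Rightarrow> bool" where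
  "pre_ENL_algebra sa m T \<longleftrightarrow> pre_Lie_algebra sa m \<and> Vector_Spaces.linear sa sa T \<and>
     (\<forall>u v. T (m u v) = m (T u) v \<and> T (m u v) = m u (T v))"

end

theory Submission
  imports Defs
begin

(* The Rota-Baxter identity says that K turns the bracket of the induced product {u,v} = rho (K u) v
   into the Lie bracket of g, so the representation property of rho becomes exactly the
   left-symmetry of {.,.}; the compatibility E o K = K o T moves T through K and then through rho. *)

lemma linear_diff_map:
  assumes "Vector_Spaces.linear s1 s2 f"
  shows "f (a - b) = f a - f b"
  using module_hom.diff[OF module_hom_linearI[OF assms]] .

lemma bilin_compose_left:
  assumes "bilin sa sb sc f" and "Vector_Spaces.linear sd sa K"
  shows "bilin sd sb sc (\<lambda>u v. f (K u) v)"
  unfolding bilin_def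
proof (intro conjI allI)
  fix u show "Vector_Spaces.linear sb sc (f (K u))"
    using assms(1) by (simp add: bilin_def)
next
  fix v
  have "Vector_Spaces.linear sd sc ((\<lambda>x. f x v) \<circ> K)"
    using assms(1) by (intro Vector_Spaces.linear_compose[OF assms(2)]) (simp add: bilin_def)
  then show "Vector_Spaces.linear sd sc (\<lambda>u. f (K u) v)"
    by (simp add: o_def)
qed

lemma relative_RB_left_symmetric:
  assumes rep: "lie_rep sg br sw rho"
    and linK: "Vector_Spaces.linear sw sg K"
    and RB: "\<And>u v. br (K u) (K v) = K (rho (K u) v - rho (K v) u)"
  shows "rho (K (rho (K x) y)) z - rho (K x) (rho (K y) z)
       = rho (K (rho (K y) x)) z - rho (K y) (rho (K x) z)"
proof -
  have lin_rho: "Vector_Spaces.linear sg sw (\<lambda>a. rho a z)"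
    using rep by (simp add: lie_rep_def bilin_def)
  have "rho (K (rho (K x) y)) z - rho (K (rho (K y) x)) z
      = rho (K (rho (K x) y) - K (rho (K y) x)) z"
    using linear_diff_map[OF lin_rho] by simp
  also have "\<dots> = rho (br (K x) (K y)) z"
    using RB linear_diff_map[OF linK] by simp
  also have "\<dots> = rho (K x) (rho (K y) z) - rho (K y) (rho (K x) z)"
    using rep by (simp add: lie_rep_def)
  finally show ?thesis
    by (simp add: algebra_simps)
qed

lemma relative_RB_pre_Lie:
  assumes "lie_rep sg br sw rho"
    and "Vector_Spaces.linear sw sg K"
    and "\<And>u v. br (K u) (K v) = K (rho (K u) v - rho (K v) u)"
  shows "pre_Lie_algebra sw (\<lambda>u v. rho (K u) v)"
proof -
  have "bilin sg sw sw rho"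
    using assms(1) by (simp add: lie_rep_def)
  then have "bilin sw sw sw (\<lambda>u v. rho (K u) v)"
    using assms(2) by (rule bilin_compose_left)
  then show ?thesis
    using assms(1) relative_RB_left_symmetric[OF assms]
    by (simp add: pre_Lie_algebra_def lie_rep_def)
qed

lemma ENE_relative_RB_commutes:
  assumes "ENE_rep sg br E sw T rho" and "ENE_relative_RB sg br E sw T rho K"
  shows "T (rho (K u) v) = rho (K (T u)) v \<and> T (rho (K u) v) = rho (K u) (T v)"
proof -
  have "E (K u) = K (T u)"
    using assms(2) by (simp add: ENE_relative_RB_def fun_eq_iff)
  moreover have "T (rho (K u) v) = rho (E (K u)) v" and "rho (E (K u)) v = rho (K u) (T v)"
    using assms(1) by (simp_all add: ENE_rep_def)
  ultimately show ?thesis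
    by metis
qed

theorem proposition7p5:
  fixes sg :: "'k::field_char_0 \<Rightarrow> 'g::ab_group_add \<Rightarrow> 'g"
    and br :: "'g \<Rightarrow> 'g \<Rightarrow> 'g" and E :: "'g \<Rightarrow> 'g"
    and sw :: "'k \<Rightarrow> 'w::ab_group_add \<Rightarrow> 'w"
    and T :: "'w \<Rightarrow> 'w" and rho :: "'g \<Rightarrow> 'w \<Rightarrow> 'w" and K :: "'w \<Rightarrow> 'g"
  assumes "alg_closed_field TYPE('k)"
    and "ENL_algebra sg br E"
    and "ENE_rep sg br E sw T rho"
    and "ENE_relative_RB sg br E sw T rho K"
  shows "pre_ENL_algebra sw (\<lambda>u v. rho (K u) v) T"
proof -
  have "pre_Lie_algebra sw (\<lambda>u v. rho (K u) v)"
    using assms(3,4)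
    by (intro relative_RB_pre_Lie) (auto simp: ENE_rep_def ENE_relative_RB_def)
  moreover have "Vector_Spaces.linear sw sw T"
    using assms(3) by (simp add: ENE_rep_def)
  ultimately show ?thesis
    using ENE_relative_RB_commutes[OF assms(3,4)] unfolding pre_ENL_algebra_def by blast
qed

end
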